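(* Let $\mathbb{K}$ be an infinite field, let $P,Q\in\mathbb{K}[x_1,\dots,x_n]$, let $X$ be a nonsingular irreducible affine variety over $\mathbb{K}$, and let $\pi=(\pi_1,\dots,\pi_n):X\to\mathbb{K}^n$ be a regular mapping such that $Q\circ\pi$ is not identically zero and $\frac{P\circ\pi}{Q\circ\pi}\in\mathcal{P}(X)_{x_0}$ for some point $x_0\in X$. Let $\varphi=(\varphi_1,\dots,\varphi_n):(X,x_0)\to\mathbb{K}^n$ be a germ of a regular mapping such that for each $1\le i\le n$, $$\varphi_i-\pi_i\in(Q\circ\pi)\,\mathfrak{m}_{x_0}\quad\text{in the ring }\mathcal{P}(X)_{x_0},$$ where $\mathfrak{m}_{x_0}$ is the maximal ideal of $\mathcal{P}(X)_{x_0}$. Then $Q\circ\varphi$ is not identically zero and the rational function $\frac{P\circ\varphi}{Q\circ\varphi}$ is regular at $x_0$, i.e. belongs to $\mathcal{P}(X)_{x_0}$.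
   Context: $\mathcal{P}(X)$ is the coordinate ring of the affine variety $X$ and $\mathcal{P}(X)_{x_0}$ its localisation at the maximal ideal of $x_0$ (the ring of germs of regular functions at $x_0$). A rational function is regular at $x_0$ if it lies in $\mathcal{P}(X)_{x_0}$ inside the field of fractions. *)

theory Defs
  imports Main "HOL-Library.Poly_Mapping"
begin

text \<open>A polynomial in the variables x_0, x_1, ... is a finitely supported map from
 monomials (finitely supported exponent vectors nat =>0 nat) to coefficients.\<close>

type_synonym 'k mpoly = "(nat \<Rightarrow>\<^sub>0 nat) \<Rightarrow>\<^sub>0 'k"

definition mpvars :: "'k::zero mpoly \<Rightarrow> nat set" where
  "mpvars p = (\<Union>mon\<in>Poly_Mapping.keys p. Poly_Mapping.keys (mon :: nat \<Rightarrow>\<^sub>0 nat))"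

text \<open>Polynomials in the n variables x_0,...,x_(n-1) (the paper's x_1..x_n).\<close>
definition polys :: "nat \<Rightarrow> 'k::zero mpoly set" where
  "polys n = {p. mpvars p \<subseteq> {..<n}}"

definition mpeval :: "'k::comm_ring_1 mpoly \<Rightarrow> (nat \<Rightarrow> 'k) \<Rightarrow> 'k" where
  "mpeval p x = (\<Sum>mon\<in>Poly_Mapping.keys p. Poly_Mapping.lookup p mon * (\<Prod>i\<in>Poly_Mapping.keys mon. x i ^ Poly_Mapping.lookup mon i))"

definition mpderiv_at :: "'k::comm_ring_1 mpoly \<Rightarrow> nat \<Rightarrow> (nat \<Rightarrow> 'k) \<Rightarrow> 'k" where
  "mpderiv_at p j x = (\<Sum>mon\<in>Poly_Mapping.keys p. Poly_Mapping.lookup p mon * of_nat (Poly_Mapping.lookup mon j)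
       * x j ^ (Poly_Mapping.lookup mon j - 1) * (\<Prod>i\<in>Poly_Mapping.keys mon - {j}. x i ^ Poly_Mapping.lookup mon i))"

text \<open>K^m is represented by the functions nat => K vanishing from index m on.\<close>
definition kspace :: "nat \<Rightarrow> (nat \<Rightarrow> 'k::zero) set" where
  "kspace m = {x. \<forall>j\<ge>m. x j = 0}"

definition zero_set :: "nat \<Rightarrow> 'k::comm_ring_1 mpoly set \<Rightarrow> (nat \<Rightarrow> 'k) set" where
  "zero_set m F = {x \<in> kspace m. \<forall>f\<in>F. mpeval f x = 0}"

definition affine_variety :: "nat \<Rightarrow> (nat \<Rightarrow> 'k::comm_ring_1) set \<Rightarrow> bool" where
  "affine_variety m X \<longleftrightarrow> (\<exists>F \<subseteq> polys m. X = zero_set m F)"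

definition irreducible_variety :: "nat \<Rightarrow> (nat \<Rightarrow> 'k::comm_ring_1) set \<Rightarrow> bool" where
  "irreducible_variety m X \<longleftrightarrow> affine_variety m X \<and> X \<noteq> {} \<and>
     (\<forall>Y Z. affine_variety m Y \<longrightarrow> affine_variety m Z \<longrightarrow> X \<subseteq> Y \<union> Z \<longrightarrow> X \<subseteq> Y \<or> X \<subseteq> Z)"

definition vanishing_ideal :: "nat \<Rightarrow> (nat \<Rightarrow> 'k::comm_ring_1) set \<Rightarrow> 'k mpoly set" where
  "vanishing_ideal m X = {p \<in> polys m. \<forall>x\<in>X. mpeval p x = 0}"

definition is_ideal_in :: "nat \<Rightarrow> 'k::comm_ring_1 mpoly set \<Rightarrow> bool" where
  "is_ideal_in m I \<longleftrightarrow> I \<subseteq> polys m \<and> 0 \<in> I \<and> (\<forall>a\<in>I. \<forall>b\<in>I. a + b \<in> I) \<and>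
     (\<forall>a\<in>I. \<forall>r\<in>polys m. r * a \<in> I)"

definition is_prime_in :: "nat \<Rightarrow> 'k::comm_ring_1 mpoly set \<Rightarrow> bool" where
  "is_prime_in m I \<longleftrightarrow> is_ideal_in m I \<and> 1 \<notin> I \<and>
     (\<forall>a\<in>polys m. \<forall>b\<in>polys m. a * b \<in> I \<longrightarrow> a \<in> I \<or> b \<in> I)"

text \<open>There is a chain of prime ideals p_0 < p_1 < ... < p_d of P(X), i.e. of prime ideals
 of the polynomial ring containing I(X).\<close>
definition has_prime_chain :: "nat \<Rightarrow> (nat \<Rightarrow> 'k::comm_ring_1) set \<Rightarrow> nat \<Rightarrow> bool" where
  "has_prime_chain m X d \<longleftrightarrow> (\<exists>C :: nat \<Rightarrow> 'k mpoly set.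
     (\<forall>i\<le>d. is_prime_in m (C i) \<and> vanishing_ideal m X \<subseteq> C i) \<and>
     (\<forall>i<d. C i \<subset> C (Suc i)))"

definition variety_dim :: "nat \<Rightarrow> (nat \<Rightarrow> 'k::comm_ring_1) set \<Rightarrow> nat \<Rightarrow> bool" where
  "variety_dim m X d \<longleftrightarrow> has_prime_chain m X d \<and> \<not> has_prime_chain m X (Suc d)"

definition lin_indep_vecs :: "nat \<Rightarrow> (nat \<Rightarrow> 'k::field) list \<Rightarrow> bool" where
  "lin_indep_vecs m vs \<longleftrightarrow> (\<forall>c :: nat \<Rightarrow> 'k.
     (\<forall>j<m. (\<Sum>l<length vs. c l * (vs ! l) j) = 0) \<longrightarrow> (\<forall>l<length vs. c l = 0))"

definition rank_ge :: "nat \<Rightarrow> (nat \<Rightarrow> 'k::field) set \<Rightarrow> nat \<Rightarrow> bool" where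
  "rank_ge m S r \<longleftrightarrow> (\<exists>vs. set vs \<subseteq> S \<and> length vs = r \<and> lin_indep_vecs m vs)"

definition gradient_at :: "nat \<Rightarrow> 'k::comm_ring_1 mpoly \<Rightarrow> (nat \<Rightarrow> 'k) \<Rightarrow> (nat \<Rightarrow> 'k)" where
  "gradient_at m p x = (\<lambda>j. if j < m then mpderiv_at p j x else 0)"

definition nonsingular_point :: "nat \<Rightarrow> (nat \<Rightarrow> 'k::field) set \<Rightarrow> (nat \<Rightarrow> 'k) \<Rightarrow> bool" where
  "nonsingular_point m X x \<longleftrightarrow> (\<exists>d r. variety_dim m X d \<and>
     rank_ge m ((\<lambda>f. gradient_at m f x) ` vanishing_ideal m X) r \<and>
     \<not> rank_ge m ((\<lambda>f. gradient_at m f x) ` vanishing_ideal m X) (Suc r) \<and> r = m - d)"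

definition nonsingular_variety :: "nat \<Rightarrow> (nat \<Rightarrow> 'k::field) set \<Rightarrow> bool" where
  "nonsingular_variety m X \<longleftrightarrow> affine_variety m X \<and> (\<forall>x\<in>X. nonsingular_point m X x)"

definition vec_of :: "nat \<Rightarrow> (nat \<Rightarrow> 'k::zero) \<Rightarrow> (nat \<Rightarrow> 'k)" where
  "vec_of n v = (\<lambda>i. if i < n then v i else 0)"

end

theory Submission
  imports Defs
begin

(*
  The congruence phi_i = pi_i modulo the ideal (Q o pi) m of the local ring at x0 is respected
  by sums and products, hence by every polynomial: F o phi = F o pi modulo (Q o pi) m.
  For F = Q this says Q o phi = (Q o pi)(1 + u) with u in m, so Q o phi is Q o pi times a unit;
  for F = P it gives P o phi = P o pi + (Q o pi) v. Dividing, P o phi / Q o phi equals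
  (P o pi / Q o pi + v) / (1 + u), which is regular at x0. Finally Q o phi does not vanish
  identically because the coordinate ring of the irreducible X is a domain in which Q o pi and
  1 + u are nonzero.
*)

definition eval_monomial :: "(nat \<Rightarrow>\<^sub>0 nat) \<Rightarrow> (nat \<Rightarrow> 'k::comm_ring_1) \<Rightarrow> 'k" where
  "eval_monomial mon x = (\<Prod>i\<in>Poly_Mapping.keys mon. x i ^ Poly_Mapping.lookup mon i)"

lemma mpeval_eq_sum_monomials:
  "mpeval p x = (\<Sum>mon\<in>Poly_Mapping.keys p. Poly_Mapping.lookup p mon * eval_monomial mon x)"
  by (simp add: mpeval_def eval_monomial_def)

lemma eval_monomial_add: "eval_monomial (k + l) x = eval_monomial k x * eval_monomial l x"
proof -
  let ?S = "Poly_Mapping.keys k \<union> Poly_Mapping.keys l"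
  have on_superset: "eval_monomial k' x = (\<Prod>i\<in>?S. x i ^ Poly_Mapping.lookup k' i)"
    if "Poly_Mapping.keys k' \<subseteq> ?S" for k'
    unfolding eval_monomial_def
    by (rule prod.mono_neutral_left) (use that in \<open>auto simp: in_keys_iff\<close>)
  show ?thesis
    using keys_add[of k l]
    by (simp add: on_superset lookup_add power_add prod.distrib)
qed

lemma mpeval_add: "mpeval (p + q) x = mpeval p x + mpeval q x"
  unfolding mpeval_eq_sum_monomials
  by (rule setsum_keys_plus_distrib) (simp_all add: distrib_right)

lemma mpeval_sum: "mpeval (\<Sum>i\<in>I. f i) x = (\<Sum>i\<in>I. mpeval (f i) x)"
  by (induction I rule: infinite_finite_induct) (simp_all add: mpeval_add mpeval_def[of 0])

lemma mpeval_single: "mpeval (Poly_Mapping.single k c) x = c * eval_monomial k x"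
  by (cases "c = 0") (auto simp: mpeval_eq_sum_monomials)

lemma mpeval_const: "mpeval (Poly_Mapping.single 0 c) x = c"
  by (simp add: mpeval_single eval_monomial_def)

lemma sum_single_lookup:
  "(\<Sum>k\<in>Poly_Mapping.keys p. Poly_Mapping.single k (Poly_Mapping.lookup p k)) = p"
  by (rule poly_mapping_eqI) (auto simp: lookup_sum lookup_single when_def in_keys_iff)

lemma mpeval_mult: "mpeval (p * q) x = mpeval p x * mpeval q x"
proof -
  have "p * q = (\<Sum>k\<in>Poly_Mapping.keys p. \<Sum>l\<in>Poly_Mapping.keys q.
        Poly_Mapping.single (k + l) (Poly_Mapping.lookup p k * Poly_Mapping.lookup q l))"
    by (subst (1 2) sum_single_lookup[symmetric]) (simp add: sum_product mult_single)
  then show ?thesis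
    by (simp add: mpeval_sum mpeval_single eval_monomial_add mpeval_eq_sum_monomials[of p]
        mpeval_eq_sum_monomials[of q] sum_product mult_ac)
qed

lemma polys_add: "p \<in> polys m \<Longrightarrow> q \<in> polys m \<Longrightarrow> p + q \<in> polys m"
  using keys_add[of p q] unfolding polys_def mpvars_def by blast

lemma polys_mult:
  assumes "p \<in> polys m" "q \<in> polys m"
  shows "p * q \<in> polys m"
proof -
  have "i < m"
    if mon: "mon \<in> Poly_Mapping.keys (p * q)" and i: "i \<in> Poly_Mapping.keys mon" for mon i
  proof -
    obtain k l where "mon = k + l" "k \<in> Poly_Mapping.keys p" "l \<in> Poly_Mapping.keys q"
      using keys_mult mon by blast
    with i keys_add[of k l] assms show ?thesis
      unfolding polys_def mpvars_def by blast
  qed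
  then show ?thesis
    unfolding polys_def mpvars_def by blast
qed

lemma polys_const: "Poly_Mapping.single 0 c \<in> polys m"
  unfolding polys_def mpvars_def by auto

definition regular_on ::
  "nat \<Rightarrow> (nat \<Rightarrow> 'k::comm_ring_1) set \<Rightarrow> ((nat \<Rightarrow> 'k) \<Rightarrow> 'k) \<Rightarrow> bool" where
  "regular_on m X f \<longleftrightarrow> (\<exists>p\<in>polys m. \<forall>x\<in>X. mpeval p x = f x)"

lemma regular_on_mpeval: "p \<in> polys m \<Longrightarrow> regular_on m X (mpeval p)"
  unfolding regular_on_def by blast

lemma regular_on_const: "regular_on m X (\<lambda>_. c)"
  unfolding regular_on_def using polys_const mpeval_const by blast

lemma regular_on_add:
  "regular_on m X f \<Longrightarrow> regular_on m X g \<Longrightarrow> regular_on m X (\<lambda>x. f x + g x)"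
  unfolding regular_on_def by (metis polys_add mpeval_add)

lemma regular_on_mult:
  "regular_on m X f \<Longrightarrow> regular_on m X g \<Longrightarrow> regular_on m X (\<lambda>x. f x * g x)"
  unfolding regular_on_def by (metis polys_mult mpeval_mult)

text \<open>Germs at x0 are represented by functions on all of X; the condition s x \<noteq> 0 cuts out
  the neighbourhood of x0 on which an identity is required.\<close>

definition regular_at ::
  "nat \<Rightarrow> (nat \<Rightarrow> 'k::comm_ring_1) set \<Rightarrow> (nat \<Rightarrow> 'k) \<Rightarrow> ((nat \<Rightarrow> 'k) \<Rightarrow> 'k) \<Rightarrow> bool" where
  "regular_at m X x0 f \<longleftrightarrow>
     (\<exists>p s. regular_on m X p \<and> regular_on m X s \<and> s x0 \<noteq> 0 \<and>
       (\<forall>x\<in>X. s x \<noteq> 0 \<longrightarrow> f x * s x = p x))"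

text \<open>f lies in q m_x0: near x0, f = q p / s with p / s in the maximal ideal m_x0, as p x0 = 0.\<close>

definition in_scaled_max_ideal ::
  "nat \<Rightarrow> (nat \<Rightarrow> 'k::comm_ring_1) set \<Rightarrow> (nat \<Rightarrow> 'k) \<Rightarrow>
    ((nat \<Rightarrow> 'k) \<Rightarrow> 'k) \<Rightarrow> ((nat \<Rightarrow> 'k) \<Rightarrow> 'k) \<Rightarrow> bool" where
  "in_scaled_max_ideal m X x0 q f \<longleftrightarrow>
     (\<exists>p s. regular_on m X p \<and> regular_on m X s \<and> s x0 \<noteq> 0 \<and> p x0 = 0 \<and>
       (\<forall>x\<in>X. s x \<noteq> 0 \<longrightarrow> f x * s x = q x * p x))"

definition congruent_mod_scaled_max ::
  "nat \<Rightarrow> (nat \<Rightarrow> 'k::comm_ring_1) set \<Rightarrow> (nat \<Rightarrow> 'k) \<Rightarrow>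
    ((nat \<Rightarrow> 'k) \<Rightarrow> 'k) \<Rightarrow> ((nat \<Rightarrow> 'k) \<Rightarrow> 'k) \<Rightarrow> ((nat \<Rightarrow> 'k) \<Rightarrow> 'k) \<Rightarrow> bool" where
  "congruent_mod_scaled_max m X x0 q f g \<longleftrightarrow>
     regular_at m X x0 f \<and> regular_at m X x0 g \<and> in_scaled_max_ideal m X x0 q (\<lambda>x. f x - g x)"

lemma regular_at_const: "regular_at m X x0 (\<lambda>_. c :: 'k::idom)"
  unfolding regular_at_def
  by (rule exI[of _ "\<lambda>_. c"], rule exI[of _ "\<lambda>_. 1"]) (simp add: regular_on_const)

lemma regular_at_add:
  assumes "regular_at m X x0 f" "regular_at m X x0 (g :: _ \<Rightarrow> 'k::idom)"
  shows "regular_at m X x0 (\<lambda>x. f x + g x)"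
proof -
  obtain p s p' s'
    where reg: "regular_on m X p" "regular_on m X s" "regular_on m X p'" "regular_on m X s'"
      and nz: "s x0 \<noteq> 0" "s' x0 \<noteq> 0"
      and f: "\<forall>x\<in>X. s x \<noteq> 0 \<longrightarrow> f x * s x = p x"
      and g: "\<forall>x\<in>X. s' x \<noteq> 0 \<longrightarrow> g x * s' x = p' x"
    using assms unfolding regular_at_def by blast
  have eq: "\<forall>x\<in>X. s x * s' x \<noteq> 0 \<longrightarrow>
      (f x + g x) * (s x * s' x) = p x * s' x + p' x * s x"
    using f g by (auto simp: algebra_simps)
  show ?thesis
    unfolding regular_at_def
    by (rule exI[of _ "\<lambda>x. p x * s' x + p' x * s x"], rule exI[of _ "\<lambda>x. s x * s' x"])
       (use reg nz eq in \<open>simp add: regular_on_add regular_on_mult\<close>)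
qed

lemma regular_at_mult:
  assumes "regular_at m X x0 f" "regular_at m X x0 (g :: _ \<Rightarrow> 'k::idom)"
  shows "regular_at m X x0 (\<lambda>x. f x * g x)"
proof -
  obtain p s p' s'
    where reg: "regular_on m X p" "regular_on m X s" "regular_on m X p'" "regular_on m X s'"
      and nz: "s x0 \<noteq> 0" "s' x0 \<noteq> 0"
      and f: "\<forall>x\<in>X. s x \<noteq> 0 \<longrightarrow> f x * s x = p x"
      and g: "\<forall>x\<in>X. s' x \<noteq> 0 \<longrightarrow> g x * s' x = p' x"
    using assms unfolding regular_at_def by blast
  have eq: "\<forall>x\<in>X. s x * s' x \<noteq> 0 \<longrightarrow> (f x * g x) * (s x * s' x) = p x * p' x"
  proof (intro ballI impI)
    fix x assume "x \<in> X" "s x * s' x \<noteq> 0"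
    with f g have e: "f x * s x = p x" "g x * s' x = p' x" by auto
    have "(f x * g x) * (s x * s' x) = (f x * s x) * (g x * s' x)" by (simp only: ac_simps)
    then show "(f x * g x) * (s x * s' x) = p x * p' x" unfolding e .
  qed
  show ?thesis
    unfolding regular_at_def
    by (rule exI[of _ "\<lambda>x. p x * p' x"], rule exI[of _ "\<lambda>x. s x * s' x"])
       (use reg nz eq in \<open>simp add: regular_on_mult\<close>)
qed

lemma in_scaled_max_ideal_add:
  assumes "in_scaled_max_ideal m X x0 q f" "in_scaled_max_ideal m X x0 q (g :: _ \<Rightarrow> 'k::idom)"
  shows "in_scaled_max_ideal m X x0 q (\<lambda>x. f x + g x)"
proof -
  obtain p s p' s'
    where reg: "regular_on m X p" "regular_on m X s" "regular_on m X p'" "regular_on m X s'"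
      and x0: "s x0 \<noteq> 0" "s' x0 \<noteq> 0" "p x0 = 0" "p' x0 = 0"
      and f: "\<forall>x\<in>X. s x \<noteq> 0 \<longrightarrow> f x * s x = q x * p x"
      and g: "\<forall>x\<in>X. s' x \<noteq> 0 \<longrightarrow> g x * s' x = q x * p' x"
    using assms unfolding in_scaled_max_ideal_def by blast
  have eq: "\<forall>x\<in>X. s x * s' x \<noteq> 0 \<longrightarrow>
      (f x + g x) * (s x * s' x) = q x * (p x * s' x + p' x * s x)"
    using f g by (auto simp: algebra_simps)
  show ?thesis
    unfolding in_scaled_max_ideal_def
    by (rule exI[of _ "\<lambda>x. p x * s' x + p' x * s x"], rule exI[of _ "\<lambda>x. s x * s' x"])
       (use reg x0 eq in \<open>simp add: regular_on_add regular_on_mult\<close>)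
qed

lemma in_scaled_max_ideal_mult:
  assumes "regular_at m X x0 f" "in_scaled_max_ideal m X x0 q (g :: _ \<Rightarrow> 'k::idom)"
  shows "in_scaled_max_ideal m X x0 q (\<lambda>x. f x * g x)"
proof -
  obtain p s p' s'
    where reg: "regular_on m X p" "regular_on m X s" "regular_on m X p'" "regular_on m X s'"
      and x0: "s x0 \<noteq> 0" "s' x0 \<noteq> 0" "p' x0 = 0"
      and f: "\<forall>x\<in>X. s x \<noteq> 0 \<longrightarrow> f x * s x = p x"
      and g: "\<forall>x\<in>X. s' x \<noteq> 0 \<longrightarrow> g x * s' x = q x * p' x"
    using assms unfolding regular_at_def in_scaled_max_ideal_def by blast
  have eq: "\<forall>x\<in>X. s x * s' x \<noteq> 0 \<longrightarrow> (f x * g x) * (s x * s' x) = q x * (p x * p' x)"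
  proof (intro ballI impI)
    fix x assume "x \<in> X" "s x * s' x \<noteq> 0"
    with f g have e: "f x * s x = p x" "g x * s' x = q x * p' x" by auto
    have "(f x * g x) * (s x * s' x) = (f x * s x) * (g x * s' x)" by (simp only: ac_simps)
    then show "(f x * g x) * (s x * s' x) = q x * (p x * p' x)"
      unfolding e by (simp only: ac_simps)
  qed
  show ?thesis
    unfolding in_scaled_max_ideal_def
    by (rule exI[of _ "\<lambda>x. p x * p' x"], rule exI[of _ "\<lambda>x. s x * s' x"])
       (use reg x0 eq in \<open>simp add: regular_on_mult\<close>)
qed

lemma congruent_mod_scaled_max_const:
  "congruent_mod_scaled_max m X x0 q (\<lambda>_. c :: 'k::idom) (\<lambda>_. c)"
  unfolding congruent_mod_scaled_max_def in_scaled_max_ideal_def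
  by (intro conjI regular_at_const, rule exI[of _ "\<lambda>_. 0"], rule exI[of _ "\<lambda>_. 1"])
     (simp add: regular_on_const)

lemma congruent_mod_scaled_max_add:
  assumes "congruent_mod_scaled_max m X x0 q f f'"
    and "congruent_mod_scaled_max m X x0 q g (g' :: _ \<Rightarrow> 'k::idom)"
  shows "congruent_mod_scaled_max m X x0 q (\<lambda>x. f x + g x) (\<lambda>x. f' x + g' x)"
proof -
  have "(\<lambda>x. (f x + g x) - (f' x + g' x)) = (\<lambda>x. (f x - f' x) + (g x - g' x))"
    by (simp add: algebra_simps)
  with assms show ?thesis
    unfolding congruent_mod_scaled_max_def by (auto intro: regular_at_add in_scaled_max_ideal_add)
qed

lemma congruent_mod_scaled_max_mult:
  assumes "congruent_mod_scaled_max m X x0 q f f'"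
    and "congruent_mod_scaled_max m X x0 q g (g' :: _ \<Rightarrow> 'k::idom)"
  shows "congruent_mod_scaled_max m X x0 q (\<lambda>x. f x * g x) (\<lambda>x. f' x * g' x)"
proof -
  have "(\<lambda>x. f x * g x - f' x * g' x) = (\<lambda>x. f x * (g x - g' x) + g' x * (f x - f' x))"
    by (simp add: algebra_simps)
  with assms show ?thesis
    unfolding congruent_mod_scaled_max_def
    by (auto intro: regular_at_mult in_scaled_max_ideal_add in_scaled_max_ideal_mult)
qed

locale pointwise_congruence =
  fixes rel :: "('a \<Rightarrow> 'k::comm_ring_1) \<Rightarrow> ('a \<Rightarrow> 'k) \<Rightarrow> bool"
  assumes rel_const: "rel (\<lambda>_. c) (\<lambda>_. c)"
    and rel_add: "rel f f' \<Longrightarrow> rel g g' \<Longrightarrow> rel (\<lambda>x. f x + g x) (\<lambda>x. f' x + g' x)"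
    and rel_mult: "rel f f' \<Longrightarrow> rel g g' \<Longrightarrow> rel (\<lambda>x. f x * g x) (\<lambda>x. f' x * g' x)"
begin

lemma rel_sum:
  "finite A \<Longrightarrow> (\<And>a. a \<in> A \<Longrightarrow> rel (F a) (G a)) \<Longrightarrow>
    rel (\<lambda>x. \<Sum>a\<in>A. F a x) (\<lambda>x. \<Sum>a\<in>A. G a x)"
  by (induction A rule: finite_induct) (simp_all add: rel_const rel_add)

lemma rel_prod:
  "finite A \<Longrightarrow> (\<And>a. a \<in> A \<Longrightarrow> rel (F a) (G a)) \<Longrightarrow>
    rel (\<lambda>x. \<Prod>a\<in>A. F a x) (\<lambda>x. \<Prod>a\<in>A. G a x)"
  by (induction A rule: finite_induct) (simp_all add: rel_const rel_mult)

lemma rel_power: "rel f g \<Longrightarrow> rel (\<lambda>x. f x ^ k) (\<lambda>x. g x ^ k)"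
  by (induction k) (simp_all add: rel_const rel_mult)

lemma rel_mpeval:
  assumes "Q \<in> polys n" and "\<And>i. i < n \<Longrightarrow> rel (f i) (g i)"
  shows "rel (\<lambda>x. mpeval Q (vec_of n (\<lambda>i. f i x))) (\<lambda>x. mpeval Q (vec_of n (\<lambda>i. g i x)))"
proof -
  have vars: "i < n" if "mon \<in> Poly_Mapping.keys Q" "i \<in> Poly_Mapping.keys mon" for mon i
    using assms(1) that unfolding polys_def mpvars_def by blast
  have expand: "(\<lambda>x. mpeval Q (vec_of n (\<lambda>i. h i x))) = (\<lambda>x. \<Sum>mon\<in>Poly_Mapping.keys Q.
      Poly_Mapping.lookup Q mon * (\<Prod>i\<in>Poly_Mapping.keys mon. h i x ^ Poly_Mapping.lookup mon i))"
    for h :: "nat \<Rightarrow> 'a \<Rightarrow> 'k"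
    unfolding mpeval_def
    by (intro ext sum.cong refl arg_cong2[where f="(*)"] prod.cong) (auto simp: vec_of_def vars)
  show ?thesis
    unfolding expand
    by (intro rel_sum rel_prod rel_mult[OF rel_const] rel_power finite_keys assms(2) vars)
qed

end

lemma pointwise_congruence_regular_on: "pointwise_congruence (\<lambda>f _. regular_on m X f)"
  by unfold_locales (simp_all add: regular_on_const regular_on_add regular_on_mult)

lemma regular_on_prod:
  "finite A \<Longrightarrow> (\<And>a. a \<in> A \<Longrightarrow> regular_on m X (F a)) \<Longrightarrow>
    regular_on m X (\<lambda>x. \<Prod>a\<in>A. F a x)"
  using pointwise_congruence.rel_prod[OF pointwise_congruence_regular_on] by blast

lemma regular_on_mpeval_compose:
  "Q \<in> polys n \<Longrightarrow> (\<And>i. i < n \<Longrightarrow> regular_on m X (f i)) \<Longrightarrow>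
    regular_on m X (\<lambda>x. mpeval Q (vec_of n (\<lambda>i. f i x)))"
  using pointwise_congruence.rel_mpeval[OF pointwise_congruence_regular_on] by blast

lemma in_scaled_max_ideal_mpeval_compose_diff:
  fixes f g :: "nat \<Rightarrow> (nat \<Rightarrow> 'k::idom) \<Rightarrow> 'k"
  assumes "Q \<in> polys n" "\<And>i. i < n \<Longrightarrow> congruent_mod_scaled_max m X x0 q (f i) (g i)"
  shows "in_scaled_max_ideal m X x0 q
           (\<lambda>x. mpeval Q (vec_of n (\<lambda>i. f i x)) - mpeval Q (vec_of n (\<lambda>i. g i x)))"
proof -
  interpret pointwise_congruence "congruent_mod_scaled_max m X x0 q"
    by unfold_locales
      (simp_all add: congruent_mod_scaled_max_const congruent_mod_scaled_max_add
        congruent_mod_scaled_max_mult)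
  from assms have "congruent_mod_scaled_max m X x0 q
      (\<lambda>x. mpeval Q (vec_of n (\<lambda>i. f i x))) (\<lambda>x. mpeval Q (vec_of n (\<lambda>i. g i x)))"
    by (rule rel_mpeval)
  then show ?thesis
    unfolding congruent_mod_scaled_max_def by blast
qed

lemma congruent_mod_scaled_max_fraction:
  fixes a b c d p :: "(nat \<Rightarrow> 'k::field) \<Rightarrow> 'k"
  assumes reg: "regular_on m X a" "regular_on m X b" "regular_on m X c" "regular_on m X d"
      "regular_on m X p"
    and at_x0: "b x0 \<noteq> 0" "d x0 \<noteq> 0" "c x0 = 0"
    and close: "\<forall>x\<in>X. (a x - p x * b x) * d x = b x * q x * c x"
  shows "congruent_mod_scaled_max m X x0 q (\<lambda>x. a x / b x) p"
proof -
  have eq: "\<forall>x\<in>X. b x * d x \<noteq> 0 \<longrightarrow> (a x / b x - p x) * (b x * d x) = q x * (b x * c x)"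
    using close by (auto simp: field_simps)
  have "regular_at m X x0 (\<lambda>x. a x / b x)"
    unfolding regular_at_def by (rule exI[of _ a], rule exI[of _ b]) (use reg at_x0 in auto)
  moreover have "regular_at m X x0 p"
    unfolding regular_at_def
    by (rule exI[of _ p], rule exI[of _ "\<lambda>_. 1"]) (use reg in \<open>simp add: regular_on_const\<close>)
  moreover have "in_scaled_max_ideal m X x0 q (\<lambda>x. a x / b x - p x)"
    unfolding in_scaled_max_ideal_def
    by (rule exI[of _ "\<lambda>x. b x * c x"], rule exI[of _ "\<lambda>x. b x * d x"])
       (use reg at_x0 eq in \<open>simp add: regular_on_mult\<close>)
  ultimately show ?thesis
    unfolding congruent_mod_scaled_max_def by blast
qed

lemma unit_multiple_of_scaled_max:
  assumes "in_scaled_max_ideal m X x0 q (\<lambda>x. G x - q x)"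
  obtains s u where "regular_on m X s" "regular_on m X u" "s x0 \<noteq> 0" "u x0 \<noteq> 0"
    "\<forall>x\<in>X. s x \<noteq> 0 \<longrightarrow> G x * s x = q x * u x"
proof -
  obtain p s where "regular_on m X p" "regular_on m X s" "s x0 \<noteq> 0" "p x0 = 0"
    and eq: "\<forall>x\<in>X. s x \<noteq> 0 \<longrightarrow> (G x - q x) * s x = q x * p x"
    using assms unfolding in_scaled_max_ideal_def by blast
  moreover have "\<forall>x\<in>X. s x \<noteq> 0 \<longrightarrow> G x * s x = q x * (s x + p x)"
    using eq by (auto simp: algebra_simps)
  ultimately show ?thesis
    using that[of s "\<lambda>x. s x + p x"] by (simp add: regular_on_add)
qed

lemma irreducible_common_nonzero:
  assumes irr: "irreducible_variety m X"
    and reg: "regular_on m X f" "regular_on m X g"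
    and nonzero: "\<exists>x\<in>X. f x \<noteq> 0" "\<exists>x\<in>X. g x \<noteq> 0"
  shows "\<exists>x\<in>X. f x \<noteq> 0 \<and> g x \<noteq> 0"
proof (rule ccontr)
  assume no_common: "\<not> ?thesis"
  obtain pf pg where pf: "pf \<in> polys m" "\<forall>x\<in>X. mpeval pf x = f x"
    and pg: "pg \<in> polys m" "\<forall>x\<in>X. mpeval pg x = g x"
    using reg unfolding regular_on_def by blast
  have "X \<subseteq> kspace m"
    using irr unfolding irreducible_variety_def affine_variety_def zero_set_def by blast
  with no_common pf pg have "X \<subseteq> zero_set m {pf} \<union> zero_set m {pg}"
    unfolding zero_set_def by auto
  moreover have "affine_variety m (zero_set m {pf})" "affine_variety m (zero_set m {pg})"
    unfolding affine_variety_def using pf pg by blast+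
  ultimately have "X \<subseteq> zero_set m {pf} \<or> X \<subseteq> zero_set m {pg}"
    using irr unfolding irreducible_variety_def by blast
  with pf pg nonzero show False
    unfolding zero_set_def by auto
qed

lemma congruent_nonvanishing:
  fixes g :: "(nat \<Rightarrow> 'k::idom) \<Rightarrow> 'k"
  assumes irr: "irreducible_variety m X" and x0: "x0 \<in> X"
    and q: "regular_on m X q" "\<exists>x\<in>X. q x \<noteq> 0"
    and G: "in_scaled_max_ideal m X x0 q (\<lambda>x. G x - q x)"
    and g: "regular_on m X g" "g x0 \<noteq> 0"
  shows "\<exists>x\<in>X. g x \<noteq> 0 \<and> G x \<noteq> 0"
proof -
  obtain s u where su: "regular_on m X s" "regular_on m X u" "s x0 \<noteq> 0" "u x0 \<noteq> 0"
    and eq: "\<forall>x\<in>X. s x \<noteq> 0 \<longrightarrow> G x * s x = q x * u x"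
    using unit_multiple_of_scaled_max[OF G] by blast
  have "\<exists>x\<in>X. q x \<noteq> 0 \<and> g x * s x * u x \<noteq> 0"
    using irr q x0 g su by (intro irreducible_common_nonzero) (auto intro: regular_on_mult)
  then obtain x where "x \<in> X" "q x \<noteq> 0" "g x \<noteq> 0" "s x \<noteq> 0" "u x \<noteq> 0"
    by auto
  with eq have "G x * s x \<noteq> 0"
    by simp
  with \<open>x \<in> X\<close> \<open>g x \<noteq> 0\<close> show ?thesis
    by auto
qed

lemma regular_quotient_of_congruent:
  fixes F :: "(nat \<Rightarrow> 'k::idom) \<Rightarrow> 'k"
  assumes x0: "x0 \<in> X"
    and r0s0: "r0 \<in> polys m" "s0 \<in> polys m" "mpeval s0 x0 \<noteq> 0"
    and quotient: "\<forall>x\<in>X. F x * mpeval s0 x = mpeval r0 x * q x"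
    and F': "in_scaled_max_ideal m X x0 q (\<lambda>x. F' x - F x)"
    and G': "in_scaled_max_ideal m X x0 q (\<lambda>x. G' x - q x)"
  shows "\<exists>r\<in>polys m. \<exists>s\<in>polys m. mpeval s x0 \<noteq> 0 \<and>
           (\<forall>x\<in>X. F' x * mpeval s x = mpeval r x * G' x)"
proof -
  obtain s1 u where su: "regular_on m X s1" "regular_on m X u" "s1 x0 \<noteq> 0" "u x0 \<noteq> 0"
    and eq1: "\<forall>x\<in>X. s1 x \<noteq> 0 \<longrightarrow> G' x * s1 x = q x * u x"
    using unit_multiple_of_scaled_max[OF G'] by blast
  obtain p2 s2 where ps: "regular_on m X p2" "regular_on m X s2" "s2 x0 \<noteq> 0"
    and eq2: "\<forall>x\<in>X. s2 x \<noteq> 0 \<longrightarrow> (F' x - F x) * s2 x = q x * p2 x"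
    using F' unfolding in_scaled_max_ideal_def by blast
  txt \<open>Where s1 and s2 do not vanish, F' s2 s0 = q (r0 s2 + p2 s0) and G' s1 = q u;
    the surplus factors s1 s2 make the identity hold where they vanish as well.\<close>
  define s where "s x = s1 x * s2 x * s2 x * mpeval s0 x * u x" for x
  define r where "r x = s1 x * s2 x * s1 x * (mpeval r0 x * s2 x + p2 x * mpeval s0 x)" for x
  have "F' x * s x = r x * G' x" if "x \<in> X" for x
  proof (cases "s1 x = 0 \<or> s2 x = 0")
    case True
    then show ?thesis unfolding s_def r_def by auto
  next
    case False
    with that eq1 eq2 quotient have "G' x * s1 x = q x * u x"
      "(F' x - F x) * s2 x = q x * p2 x" "F x * mpeval s0 x = mpeval r0 x * q x"
      by auto
    then show ?thesis unfolding s_def r_def by algebra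
  qed
  moreover have "regular_on m X r" "regular_on m X s"
    unfolding r_def s_def using r0s0 su ps
    by (simp_all add: regular_on_add regular_on_mult regular_on_mpeval)
  then obtain r' s' where "r' \<in> polys m" "s' \<in> polys m"
    "\<forall>x\<in>X. mpeval r' x = r x" "\<forall>x\<in>X. mpeval s' x = s x"
    unfolding regular_on_def by blast
  moreover have "s x0 \<noteq> 0"
    unfolding s_def using r0s0 su ps by simp
  ultimately show ?thesis
    using x0 by metis
qed


theorem lemma2p4:
  fixes m n :: nat
    and X :: "(nat \<Rightarrow> 'k::field) set"
    and x0 :: "nat \<Rightarrow> 'k"
    and P Q :: "'k mpoly"
    and pi a b :: "nat \<Rightarrow> 'k mpoly"
  assumes infinite_field: "infinite (UNIV :: 'k set)"
    and PQ: "P \<in> polys n" "Q \<in> polys n"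
    and X_irr: "irreducible_variety m X"
    and X_nonsing: "nonsingular_variety m X"
    and x0: "x0 \<in> X"
    and pi_reg: "\<forall>i<n. pi i \<in> polys m"
    and Qpi_nonzero: "\<exists>x\<in>X. mpeval Q (vec_of n (\<lambda>i. mpeval (pi i) x)) \<noteq> 0"
    and PQpi_regular: "\<exists>r\<in>polys m. \<exists>s\<in>polys m. mpeval s x0 \<noteq> 0 \<and>
          (\<forall>x\<in>X. mpeval P (vec_of n (\<lambda>i. mpeval (pi i) x)) * mpeval s x
                 = mpeval r x * mpeval Q (vec_of n (\<lambda>i. mpeval (pi i) x)))"
    and phi_germ: "\<forall>i<n. a i \<in> polys m \<and> b i \<in> polys m \<and> mpeval (b i) x0 \<noteq> 0"
    and phi_close: "\<forall>i<n. \<exists>c\<in>polys m. \<exists>d\<in>polys m. mpeval d x0 \<noteq> 0 \<and> mpeval c x0 = 0 \<and>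
          (\<forall>x\<in>X. (mpeval (a i) x - mpeval (pi i) x * mpeval (b i) x) * mpeval d x
                 = mpeval (b i) x * mpeval Q (vec_of n (\<lambda>i. mpeval (pi i) x)) * mpeval c x)"
  shows "(\<exists>x\<in>X. (\<forall>i<n. mpeval (b i) x \<noteq> 0) \<and>
            mpeval Q (vec_of n (\<lambda>i. mpeval (a i) x / mpeval (b i) x)) \<noteq> 0) \<and>
         (\<exists>r\<in>polys m. \<exists>s\<in>polys m. mpeval s x0 \<noteq> 0 \<and>
            (\<forall>x\<in>X. (\<forall>i<n. mpeval (b i) x \<noteq> 0) \<longrightarrow>
               mpeval P (vec_of n (\<lambda>i. mpeval (a i) x / mpeval (b i) x)) * mpeval s x
               = mpeval r x * mpeval Q (vec_of n (\<lambda>i. mpeval (a i) x / mpeval (b i) x))))"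
proof -
  define q where "q x = mpeval Q (vec_of n (\<lambda>i. mpeval (pi i) x))" for x
  define phi where "phi i x = mpeval (a i) x / mpeval (b i) x" for i x
  have phi_cong: "congruent_mod_scaled_max m X x0 q (phi i) (mpeval (pi i))" if i: "i < n" for i
  proof -
    obtain c d where "c \<in> polys m" "d \<in> polys m" "mpeval d x0 \<noteq> 0" "mpeval c x0 = 0"
      "\<forall>x\<in>X. (mpeval (a i) x - mpeval (pi i) x * mpeval (b i) x) * mpeval d x
          = mpeval (b i) x * q x * mpeval c x"
      using phi_close i unfolding q_def by blast
    with phi_germ pi_reg i show ?thesis
      unfolding phi_def by (intro congruent_mod_scaled_max_fraction) (auto intro: regular_on_mpeval)
  qed
  have "in_scaled_max_ideal m X x0 q
      (\<lambda>x. mpeval Q (vec_of n (\<lambda>i. phi i x)) - mpeval Q (vec_of n (\<lambda>i. mpeval (pi i) x)))"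
    using PQ(2) phi_cong by (rule in_scaled_max_ideal_mpeval_compose_diff)
  then have Q_cong:
    "in_scaled_max_ideal m X x0 q (\<lambda>x. mpeval Q (vec_of n (\<lambda>i. phi i x)) - q x)"
    by (simp only: q_def)
  have P_cong: "in_scaled_max_ideal m X x0 q
      (\<lambda>x. mpeval P (vec_of n (\<lambda>i. phi i x)) - mpeval P (vec_of n (\<lambda>i. mpeval (pi i) x)))"
    using PQ(1) phi_cong by (rule in_scaled_max_ideal_mpeval_compose_diff)
  have q_reg: "regular_on m X q"
    unfolding q_def using PQ(2) pi_reg by (intro regular_on_mpeval_compose regular_on_mpeval) auto
  have q_nonzero: "\<exists>x\<in>X. q x \<noteq> 0"
    using Qpi_nonzero by (simp add: q_def)
  have b_reg: "regular_on m X (\<lambda>x. \<Prod>i<n. mpeval (b i) x)"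
    using phi_germ by (intro regular_on_prod regular_on_mpeval) auto
  have nonvanishing:
    "\<exists>x\<in>X. (\<forall>i<n. mpeval (b i) x \<noteq> 0) \<and> mpeval Q (vec_of n (\<lambda>i. phi i x)) \<noteq> 0"
    using congruent_nonvanishing[OF X_irr x0 q_reg q_nonzero Q_cong b_reg] phi_germ by auto
  obtain r0 s0 where "r0 \<in> polys m" "s0 \<in> polys m" "mpeval s0 x0 \<noteq> 0"
    "\<forall>x\<in>X. mpeval P (vec_of n (\<lambda>i. mpeval (pi i) x)) * mpeval s0 x = mpeval r0 x * q x"
    using PQpi_regular unfolding q_def by blast
  with x0 P_cong Q_cong have regular: "\<exists>r\<in>polys m. \<exists>s\<in>polys m. mpeval s x0 \<noteq> 0 \<and>
      (\<forall>x\<in>X. mpeval P (vec_of n (\<lambda>i. phi i x)) * mpeval s x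
        = mpeval r x * mpeval Q (vec_of n (\<lambda>i. phi i x)))"
    by (intro regular_quotient_of_congruent)
  from nonvanishing regular show ?thesis
    unfolding phi_def by blast
qed

end
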